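(* Let $N\ge1$, $\Gamma\in\{\Gamma_0(N),\Gamma_1(N)\}$, $k\in\mathbb{Z}$, $m\in\mathbb{Z}_{>0}$, and let $\varphi$ be a meromorphic Jacobi form of weight $k$ and index $m$ w.r.t. $\Gamma\ltimes\mathbb{Z}^2$ with (at most) double poles at $z=z_s=\alpha\tau+\beta$ for $s=(\alpha,\beta)\in S(\varphi)\subset\mathbb{Q}^2$. Then for all $\gamma=\begin{pmatrix}a&b\\c&d\end{pmatrix}\in\Gamma$: $E_s(\frac{a\tau+b}{c\tau+d})=(c\tau+d)^{k-2}E_{s\gamma}(\tau)$ and $D_s(\frac{a\tau+b}{c\tau+d})=(c\tau+d)^{k-1}D_{s\gamma}(\tau)$, where $s\gamma=(a\alpha+c\beta,b\alpha+d\beta)$.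
   Context: $\mathbf{e}(t)=e^{2\pi it}$. $\Gamma_0(N)$: $c\equiv0\bmod N$; $\Gamma_1(N)$: also $a\equiv d\equiv1\bmod N$. A meromorphic Jacobi form of weight $k$, index $m$ for $\Gamma\ltimes\mathbb{Z}^2$: meromorphic in $z$, weakly holomorphic in $\tau$, with $\varphi(\frac{a\tau+b}{c\tau+d},\frac z{c\tau+d})=(c\tau+d)^k\mathbf{e}(\frac{mcz^2}{c\tau+d})\varphi(\tau,z)$ for $\gamma\in\Gamma$ and $\varphi(\tau,z+\lambda\tau+\mu)=\mathbf{e}(-m(\lambda^2\tau+2\lambda z))\varphi(\tau,z)$ for $(\lambda,\mu)\in\mathbb{Z}^2$. $D_s,E_s$ are defined by $\mathbf{e}(m\alpha z_s)\varphi(\tau,z_s+\varepsilon)=\frac{E_s(\tau)}{(2\pi i\varepsilon)^2}+\frac{D_s(\tau)-2m\alpha E_s(\tau)}{2\pi i\varepsilon}+O(1)$ as $\varepsilon\to0$. *)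

theory Defs
  imports "HOL-Complex_Analysis.Complex_Analysis"
begin

definition ee :: "complex \<Rightarrow> complex" where
  "ee t = exp (2 * pi * \<i> * t)"

definition upper_half_plane :: "complex set" where
  "upper_half_plane = {\<tau>. Im \<tau> > 0}"

text \<open>Matrices (a,b,c,d) stand for [[a,b],[c,d]].\<close>
definition Gamma0 :: "int \<Rightarrow> (int \<times> int \<times> int \<times> int) set" where
  "Gamma0 N = {(a,b,c,d). a * d - b * c = 1 \<and> c mod N = 0}"

definition Gamma1 :: "int \<Rightarrow> (int \<times> int \<times> int \<times> int) set" where
  "Gamma1 N = {(a,b,c,d). a * d - b * c = 1 \<and> c mod N = 0 \<and> a mod N = 1 mod N \<and> d mod N = 1 mod N}"

definition zs :: "rat \<times> rat \<Rightarrow> complex \<Rightarrow> complex" where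
  "zs s \<tau> = of_rat (fst s) * \<tau> + of_rat (snd s)"

definition poles :: "(rat \<times> rat) set \<Rightarrow> complex \<Rightarrow> complex set" where
  "poles S \<tau> = {zs s \<tau> | s. s \<in> S}"

definition sact :: "rat \<times> rat \<Rightarrow> int \<times> int \<times> int \<times> int \<Rightarrow> rat \<times> rat" where
  "sact s g = (case g of (a,b,c,d) \<Rightarrow>
      (of_int a * fst s + of_int c * snd s, of_int b * fst s + of_int d * snd s))"

definition merom_jacobi ::
  "(int \<times> int \<times> int \<times> int) set \<Rightarrow> int \<Rightarrow> int \<Rightarrow> (rat \<times> rat) set
     \<Rightarrow> (complex \<Rightarrow> complex \<Rightarrow> complex) \<Rightarrow> bool" where
  "merom_jacobi G k m S \<phi> \<longleftrightarrow>
     (\<forall>\<tau>\<in>upper_half_plane.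
        \<phi> \<tau> meromorphic_on UNIV \<and> \<phi> \<tau> holomorphic_on (UNIV - poles S \<tau>)) \<and>
     (\<forall>z. (\<lambda>\<tau>. \<phi> \<tau> z) holomorphic_on {\<tau>\<in>upper_half_plane. z \<notin> poles S \<tau>}) \<and>
     (\<forall>\<tau>\<in>upper_half_plane. \<forall>s\<in>S.
        \<exists>B. \<forall>\<^sub>F \<epsilon> in at 0. norm (\<epsilon>\<^sup>2 * \<phi> \<tau> (zs s \<tau> + \<epsilon>)) \<le> B) \<and>
     (\<forall>(a,b,c,d)\<in>G. \<forall>\<tau>\<in>upper_half_plane. \<forall>z.
        z \<notin> poles S \<tau> \<longrightarrow> z / (of_int c * \<tau> + of_int d)
          \<notin> poles S ((of_int a * \<tau> + of_int b) / (of_int c * \<tau> + of_int d)) \<longrightarrow>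
        \<phi> ((of_int a * \<tau> + of_int b) / (of_int c * \<tau> + of_int d)) (z / (of_int c * \<tau> + of_int d))
          = (of_int c * \<tau> + of_int d) powi k
            * ee (of_int m * of_int c * z\<^sup>2 / (of_int c * \<tau> + of_int d)) * \<phi> \<tau> z) \<and>
     (\<forall>l n :: int. \<forall>\<tau>\<in>upper_half_plane. \<forall>z.
        z \<notin> poles S \<tau> \<longrightarrow> z + of_int l * \<tau> + of_int n \<notin> poles S \<tau> \<longrightarrow>
        \<phi> \<tau> (z + of_int l * \<tau> + of_int n)
          = ee (- of_int m * ((of_int l)^2 * \<tau> + 2 * of_int l * z)) * \<phi> \<tau> z)"

definition jexpansion ::
  "(complex \<Rightarrow> complex \<Rightarrow> complex) \<Rightarrow> int \<Rightarrow> rat \<times> rat \<Rightarrow> complex \<Rightarrow> complex \<Rightarrow> complex \<Rightarrow> bool" where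
  "jexpansion \<phi> m s \<tau> E D \<longleftrightarrow>
     (\<exists>B. \<forall>\<^sub>F \<epsilon> in at 0.
        norm (ee (of_int m * of_rat (fst s) * zs s \<tau>) * \<phi> \<tau> (zs s \<tau> + \<epsilon>)
              - E / (2 * pi * \<i> * \<epsilon>)\<^sup>2
              - (D - 2 * of_int m * of_rat (fst s) * E) / (2 * pi * \<i> * \<epsilon>)) \<le> B)"

definition JE :: "(complex \<Rightarrow> complex \<Rightarrow> complex) \<Rightarrow> int \<Rightarrow> rat \<times> rat \<Rightarrow> complex \<Rightarrow> complex" where
  "JE \<phi> m s \<tau> = fst (THE p. jexpansion \<phi> m s \<tau> (fst p) (snd p))"

definition JD :: "(complex \<Rightarrow> complex \<Rightarrow> complex) \<Rightarrow> int \<Rightarrow> rat \<times> rat \<Rightarrow> complex \<Rightarrow> complex" where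
  "JD \<phi> m s \<tau> = snd (THE p. jexpansion \<phi> m s \<tau> (fst p) (snd p))"

end

theory Submission
  imports Defs "HOL-Library.Landau_Symbols"
begin

(*
  Since eps^2 phi(tau, z_s + eps) is bounded, the removable singularity theorem and a
  second-order Taylor expansion give
    e(m alpha z_s) phi(tau, z_s + eps) = E/(2 pi i eps)^2 + (D - 2 m alpha E)/(2 pi i eps) + O(1),
  and two such expansions have the same coefficients, so E_s and D_s are these E and D.

  For gamma in Gamma put j = c tau + d and tau' = gamma tau; then z_{s gamma}(tau) = j z_s(tau').
  Substituting z = z_{s gamma}(tau) + eps into the transformation law gives
    e(m alpha' z_{s gamma}(tau)) phi(tau, z_{s gamma}(tau) + eps)
      = j^(-k) e(k1 eps + k2 eps^2) e(m alpha z_s(tau')) phi(tau', z_s(tau') + eps/j)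
  with k1 = 2m (alpha/j - alpha') and k2 = -m c/j. The rescaling eps -> eps/j multiplies the
  coefficients of eps^-2 and eps^-1 by j^2 and j, and e(k1 eps + k2 eps^2) = 1 + 2 pi i k1 eps + O(eps^2)
  adds k1 times the first coefficient to the second, which turns the correction -2 m alpha E
  into -2 m alpha' E. The law is only assumed off the lines z = z_t(tau), t in S, a countable but
  possibly dense set; both sides are continuous near eps = 0, so the identity extends to a
  punctured neighbourhood.
*)

lemma bigo_1_iff_eventually_norm_le:
  "f \<in> O[F](\<lambda>_. 1) \<longleftrightarrow> (\<exists>B. eventually (\<lambda>x. norm (f x) \<le> B) F)"
proof
  assume "f \<in> O[F](\<lambda>_. 1)"
  then obtain B where "eventually (\<lambda>x. norm (f x) \<le> B * norm (1 :: 'b)) F"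
    by (elim landau_o.bigE)
  then show "\<exists>B. eventually (\<lambda>x. norm (f x) \<le> B) F" by auto
qed auto

lemma isCont_imp_bigo_1_at:
  "isCont f x \<Longrightarrow> f \<in> O[at x](\<lambda>_. 1)"
  by (rule bigoI_tendsto[where c = "f x"]) (simp_all add: isCont_def)

lemma holomorphic_taylor2_remainder_bigo_1:
  assumes "g holomorphic_on S" "open S" "0 \<in> S"
  shows "(\<lambda>\<epsilon>. (g \<epsilon> - g 0 - deriv g 0 * \<epsilon>) / \<epsilon>\<^sup>2) \<in> O[at 0](\<lambda>_. 1)"
proof -
  define h where "h = (\<lambda>z. if z = 0 then deriv g 0 else (g z - g 0) / (z - 0))"
  define h2 where "h2 = (\<lambda>z. if z = 0 then deriv h 0 else (h z - h 0) / (z - 0))"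
  have "h holomorphic_on S"
    unfolding h_def by (rule pole_lemma_open[OF assms(1,2)])
  then have "h2 holomorphic_on S"
    unfolding h2_def by (rule pole_lemma_open[OF _ assms(2)])
  then have "isCont h2 0"
    using assms(2,3) by (meson continuous_on_eq_continuous_at holomorphic_on_imp_continuous_on)
  then have "h2 \<in> O[at 0](\<lambda>_. 1)" by (rule isCont_imp_bigo_1_at)
  moreover have "\<forall>\<^sub>F \<epsilon> in at 0. h2 \<epsilon> = (g \<epsilon> - g 0 - deriv g 0 * \<epsilon>) / \<epsilon>\<^sup>2"
    by (auto simp: eventually_at_filter h_def h2_def field_simps power2_eq_square)
  ultimately show ?thesis by (rule landau_o.big.in_cong[THEN iffD1, rotated])
qed

lemma bigo_1_at_0_inverse_powers_eq_0:
  fixes u v :: "'a :: real_normed_field"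
  assumes "(\<lambda>\<epsilon>. u / \<epsilon>\<^sup>2 + v / \<epsilon>) \<in> O[at 0](\<lambda>_. 1)"
  shows "u = 0 \<and> v = 0"
proof -
  have "(\<lambda>\<epsilon>::'a. \<epsilon>) \<in> o[at 0](\<lambda>_. 1)"
    by (rule smalloI_tendsto) (auto intro!: tendsto_eq_intros)
  then have small: "(\<lambda>\<epsilon>. \<epsilon> * (u / \<epsilon>\<^sup>2 + v / \<epsilon>)) \<in> o[at 0](\<lambda>_. 1)"
    using landau_o.small_big_mult[OF _ assms] by simp
  have "((\<lambda>\<epsilon>. \<epsilon> * (u / \<epsilon>\<^sup>2 + v / \<epsilon>)) \<longlongrightarrow> 0) (at 0)"
    using smalloD_tendsto[OF small] by simp
  then have "((\<lambda>\<epsilon>. \<epsilon> * (\<epsilon> * (u / \<epsilon>\<^sup>2 + v / \<epsilon>))) \<longlongrightarrow> 0 * 0) (at 0)"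
    by (intro tendsto_mult) (auto intro!: tendsto_eq_intros)
  moreover have "\<forall>\<^sub>F \<epsilon> in at 0. \<epsilon> * (\<epsilon> * (u / \<epsilon>\<^sup>2 + v / \<epsilon>)) = u + v * \<epsilon>"
    by (auto simp: eventually_at_filter field_simps power2_eq_square)
  ultimately have "((\<lambda>\<epsilon>. u + v * \<epsilon>) \<longlongrightarrow> 0) (at (0::'a))"
    by (simp add: tendsto_cong)
  moreover have "((\<lambda>\<epsilon>. u + v * \<epsilon>) \<longlongrightarrow> u) (at (0::'a))"
    by (auto intro!: tendsto_eq_intros)
  ultimately have u: "u = 0" by (metis tendsto_unique at_neq_bot)
  have "\<forall>\<^sub>F \<epsilon> in at 0. \<epsilon> * (u / \<epsilon>\<^sup>2 + v / \<epsilon>) = v"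
    by (auto simp: eventually_at_filter u)
  with \<open>((\<lambda>\<epsilon>. \<epsilon> * (u / \<epsilon>\<^sup>2 + v / \<epsilon>)) \<longlongrightarrow> 0) (at 0)\<close> have "((\<lambda>_. v) \<longlongrightarrow> 0) (at (0::'a))"
    by (simp add: tendsto_cong)
  then have "v = 0" by (simp add: tendsto_const_iff)
  with u show ?thesis ..
qed

definition has_principal_part :: "(complex \<Rightarrow> complex) \<Rightarrow> complex \<Rightarrow> complex \<Rightarrow> bool" where
  "has_principal_part f E D \<longleftrightarrow>
     (\<lambda>\<epsilon>. f \<epsilon> - E / (2 * pi * \<i> * \<epsilon>)\<^sup>2 - D / (2 * pi * \<i> * \<epsilon>)) \<in> O[at 0](\<lambda>_. 1)"

lemma has_principal_part_unique:
  assumes "has_principal_part f E D" "has_principal_part f E' D'"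
  shows "E = E' \<and> D = D'"
proof -
  define c :: complex where "c = 2 * pi * \<i>"
  have "c \<noteq> 0" by (simp add: c_def)
  have "(\<lambda>\<epsilon>. (f \<epsilon> - E' / (c * \<epsilon>)\<^sup>2 - D' / (c * \<epsilon>)) - (f \<epsilon> - E / (c * \<epsilon>)\<^sup>2 - D / (c * \<epsilon>)))
          \<in> O[at 0](\<lambda>_. 1)"
    using assms unfolding has_principal_part_def c_def by (rule sum_in_bigo(2)[rotated])
  also have "(\<lambda>\<epsilon>. (f \<epsilon> - E' / (c * \<epsilon>)\<^sup>2 - D' / (c * \<epsilon>)) - (f \<epsilon> - E / (c * \<epsilon>)\<^sup>2 - D / (c * \<epsilon>)))
      = (\<lambda>\<epsilon>. ((E - E') / c\<^sup>2) / \<epsilon>\<^sup>2 + ((D - D') / c) / \<epsilon>)"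
    by (simp add: fun_eq_iff diff_divide_distrib power_mult_distrib divide_divide_eq_left)
  finally show ?thesis
    using bigo_1_at_0_inverse_powers_eq_0 \<open>c \<noteq> 0\<close> by fastforce
qed

lemma has_principal_part_cong:
  assumes "\<forall>\<^sub>F \<epsilon> in at 0. f \<epsilon> = g \<epsilon>" "has_principal_part f E D"
  shows "has_principal_part g E D"
  using assms(2) unfolding has_principal_part_def
  by (rule landau_o.big.in_cong[THEN iffD1, rotated]) (use assms(1) in \<open>auto elim: eventually_mono\<close>)

lemma has_principal_part_rescale:
  assumes "has_principal_part f E D" "j \<noteq> 0"
  shows "has_principal_part (\<lambda>\<epsilon>. p * f (\<epsilon> / j)) (p * j\<^sup>2 * E) (p * j * D)"
proof -
  define c :: complex where "c = 2 * pi * \<i>"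
  define R where "R = (\<lambda>\<delta>. f \<delta> - E / (c * \<delta>)\<^sup>2 - D / (c * \<delta>))"
  have "filterlim (\<lambda>\<epsilon>. \<epsilon> / j) (at 0) (at 0)"
    using assms(2) by (intro filterlim_atI) (auto intro!: tendsto_eq_intros simp: eventually_at_filter)
  with assms(1) have "(\<lambda>\<epsilon>. R (\<epsilon> / j)) \<in> O[at 0](\<lambda>_. 1)"
    unfolding has_principal_part_def R_def c_def using landau_o.big.compose by fastforce
  then have "(\<lambda>\<epsilon>. p * R (\<epsilon> / j)) \<in> O[at 0](\<lambda>_. 1)"
    by simp
  also have "(\<lambda>\<epsilon>. p * R (\<epsilon> / j))
      = (\<lambda>\<epsilon>. p * f (\<epsilon> / j) - p * j\<^sup>2 * E / (c * \<epsilon>)\<^sup>2 - p * j * D / (c * \<epsilon>))"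
    using assms(2) by (auto simp: R_def field_simps power2_eq_square)
  finally show ?thesis unfolding has_principal_part_def c_def .
qed

lemma has_principal_part_mult_ee:
  assumes "has_principal_part f E D"
  shows "has_principal_part (\<lambda>\<epsilon>. ee (a * \<epsilon> + b * \<epsilon>\<^sup>2) * f \<epsilon>) E (D + a * E)"
proof -
  define c :: complex where "c = 2 * pi * \<i>"
  define L where "L = (\<lambda>\<epsilon>. ee (a * \<epsilon> + b * \<epsilon>\<^sup>2))"
  define R where "R = (\<lambda>\<epsilon>. f \<epsilon> - E / (c * \<epsilon>)\<^sup>2 - D / (c * \<epsilon>))"
  define T where "T = (\<lambda>\<epsilon>. (L \<epsilon> - L 0 - deriv L 0 * \<epsilon>) / \<epsilon>\<^sup>2)"
  have L_holo: "L holomorphic_on UNIV"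
    unfolding L_def ee_def by (auto intro!: holomorphic_intros)
  have L_deriv: "(L has_field_derivative c * a) (at 0)"
    unfolding L_def ee_def c_def by (auto intro!: derivative_eq_intros)
  then have L_0: "L 0 = 1" "deriv L 0 = c * a"
    by (simp_all add: L_def ee_def DERIV_imp_deriv)
  have "L \<in> O[at 0](\<lambda>_. 1)"
    using L_deriv by (intro isCont_imp_bigo_1_at DERIV_isCont)
  moreover have "R \<in> O[at 0](\<lambda>_. 1)"
    using assms unfolding has_principal_part_def R_def c_def .
  moreover have "T \<in> O[at 0](\<lambda>_. 1)"
    unfolding T_def using L_holo by (rule holomorphic_taylor2_remainder_bigo_1) simp_all
  moreover have "(\<lambda>\<epsilon>::complex. \<epsilon>) \<in> O[at 0](\<lambda>_. 1)"
    by (intro isCont_imp_bigo_1_at continuous_intros)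
  ultimately have "(\<lambda>\<epsilon>. L \<epsilon> * R \<epsilon> + E / c\<^sup>2 * T \<epsilon> + D * a + D / c * \<epsilon> * T \<epsilon>) \<in> O[at 0](\<lambda>_. 1)"
    by (intro sum_in_bigo(1) landau_o.big_1_mult bigo_const)
  \<comment> \<open>\<open>L \<epsilon> = 1 + c a \<epsilon> + \<epsilon>\<^sup>2 T \<epsilon>\<close>\<close>
  moreover have "\<forall>\<^sub>F \<epsilon> in at 0. L \<epsilon> * R \<epsilon> + E / c\<^sup>2 * T \<epsilon> + D * a + D / c * \<epsilon> * T \<epsilon>
      = L \<epsilon> * f \<epsilon> - E / (c * \<epsilon>)\<^sup>2 - (D + a * E) / (c * \<epsilon>)"
    by (auto simp: eventually_at_filter R_def T_def L_0 c_def field_simps power2_eq_square)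
  ultimately show ?thesis
    unfolding has_principal_part_def L_def c_def by (rule landau_o.big.in_cong[THEN iffD1, rotated])
qed

lemma has_principal_part_exists:
  assumes "isolated_singularity_at f 0"
    and "\<exists>B. \<forall>\<^sub>F \<epsilon> in at 0. norm (\<epsilon>\<^sup>2 * f \<epsilon>) \<le> B"
  shows "\<exists>E D. has_principal_part f E D"
proof -
  define c :: complex where "c = 2 * pi * \<i>"
  obtain r where "r > 0" and "f analytic_on ball 0 r - {0}"
    using assms(1) unfolding isolated_singularity_at_def by blast
  then have "(\<lambda>\<epsilon>. \<epsilon>\<^sup>2 * f \<epsilon>) holomorphic_on ball 0 r - {0}"
    by (intro holomorphic_intros analytic_imp_holomorphic)
  then have "\<exists>g. g holomorphic_on ball 0 r \<and> (\<forall>\<epsilon>\<in>ball 0 r - {0}. g \<epsilon> = \<epsilon>\<^sup>2 * f \<epsilon>)"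
    using holomorphic_on_extend_bounded assms(2) \<open>r > 0\<close> by simp
  then obtain g where g: "g holomorphic_on ball 0 r" "\<And>\<epsilon>. \<epsilon> \<in> ball 0 r - {0} \<Longrightarrow> g \<epsilon> = \<epsilon>\<^sup>2 * f \<epsilon>"
    by blast
  have "(\<lambda>\<epsilon>. (g \<epsilon> - g 0 - deriv g 0 * \<epsilon>) / \<epsilon>\<^sup>2) \<in> O[at 0](\<lambda>_. 1)"
    using holomorphic_taylor2_remainder_bigo_1[OF g(1)] \<open>r > 0\<close> by simp
  moreover have "\<forall>\<^sub>F \<epsilon> in at 0. \<epsilon> \<in> ball 0 r - {0}"
    using \<open>r > 0\<close> by (auto simp: eventually_at dist_commute intro!: exI[of _ r])
  then have "\<forall>\<^sub>F \<epsilon> in at 0. (g \<epsilon> - g 0 - deriv g 0 * \<epsilon>) / \<epsilon>\<^sup>2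
      = f \<epsilon> - c\<^sup>2 * g 0 / (c * \<epsilon>)\<^sup>2 - c * deriv g 0 / (c * \<epsilon>)"
    by eventually_elim (auto simp: g(2) c_def field_simps power2_eq_square)
  ultimately have "has_principal_part f (c\<^sup>2 * g 0) (c * deriv g 0)"
    unfolding has_principal_part_def c_def by (rule landau_o.big.in_cong[THEN iffD1, rotated])
  then show ?thesis by blast
qed

lemma islimpt_open_Diff_countable:
  fixes x :: "'a::euclidean_space"
  assumes "open U" "x \<in> U" "countable C"
  shows "x islimpt U - C"
  unfolding islimpt_approachable
proof (intro allI impI)
  fix \<epsilon> :: real
  assume "\<epsilon> > 0"
  obtain r where "r > 0" "ball x r \<subseteq> U"
    using assms(1,2) by (rule openE)
  have "\<not> ball x (min \<epsilon> r) \<subseteq> insert x C"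
  proof
    assume "ball x (min \<epsilon> r) \<subseteq> insert x C"
    moreover have "countable (insert x C)"
      using assms(3) by simp
    ultimately have "countable (ball x (min \<epsilon> r))"
      by (rule countable_subset)
    moreover have "uncountable (ball x (min \<epsilon> r))"
      using \<open>\<epsilon> > 0\<close> \<open>r > 0\<close> by (intro uncountable_ball) simp
    ultimately show False by contradiction
  qed
  then obtain y where "y \<in> ball x (min \<epsilon> r)" "y \<notin> insert x C"
    by blast
  with \<open>ball x r \<subseteq> U\<close> show "\<exists>y\<in>U - C. y \<noteq> x \<and> dist y x < \<epsilon>"
    by (intro bexI[of _ y]) (auto simp: dist_commute)
qed

lemma eventually_at_eq_off_countable:
  fixes f g :: "'a::euclidean_space \<Rightarrow> 'b::t2_space"
  assumes "countable C"
    and "\<forall>\<^sub>F x in at x0. isCont f x \<and> isCont g x"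
    and "\<forall>\<^sub>F x in at x0. x \<notin> C \<longrightarrow> f x = g x"
  shows "\<forall>\<^sub>F x in at x0. f x = g x"
proof -
  from eventually_conj[OF assms(2,3)] obtain U where "open U" "x0 \<in> U"
    and U: "\<And>x. x \<in> U \<Longrightarrow> x \<noteq> x0 \<Longrightarrow> isCont f x \<and> isCont g x \<and> (x \<notin> C \<longrightarrow> f x = g x)"
    unfolding eventually_at_topological by blast
  have "f x = g x" if x: "x \<in> U - {x0}" for x
  proof -
    define F where "F = at x within (U - {x0} - C)"
    have "x islimpt U - {x0} - C"
      using x \<open>open U\<close> assms(1) by (intro islimpt_open_Diff_countable) auto
    then have "F \<noteq> bot"
      unfolding F_def using trivial_limit_within by blast
    have f_lim: "(f \<longlongrightarrow> f x) F" and g_lim: "(g \<longlongrightarrow> g x) F"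
      using U[of x] x unfolding F_def isCont_def by (auto intro: tendsto_within_subset)
    have "\<forall>\<^sub>F y in F. g y = f y"
      unfolding F_def eventually_at_filter using U by (intro always_eventually) auto
    with g_lim have "(f \<longlongrightarrow> g x) F"
      by (rule Lim_transform_eventually)
    with \<open>F \<noteq> bot\<close> f_lim show ?thesis
      by (rule tendsto_unique)
  qed
  with \<open>open U\<close> \<open>x0 \<in> U\<close> show ?thesis
    unfolding eventually_at_topological by blast
qed

lemma isolated_singularity_at_eventually_isCont_affine:
  assumes "isolated_singularity_at f z" "u \<noteq> 0"
  shows "\<forall>\<^sub>F e in at 0. isCont (\<lambda>e. f (z + e / u)) e"
proof -
  have "filterlim (\<lambda>e. z + e / u) (at z) (at 0)"
    using assms(2) by (intro filterlim_atI) (auto intro!: tendsto_eq_intros simp: eventually_at_filter)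
  with assms(1) have "\<forall>\<^sub>F e in at 0. f analytic_on {z + e / u}"
    unfolding isolated_singularity_at_altdef by (rule eventually_compose_filterlim)
  then show ?thesis
  proof eventually_elim
    case (elim e)
    have "isCont (\<lambda>e. z + e / u) e"
      using assms(2) by (intro continuous_intros)
    from isCont_o2[OF this analytic_at_imp_isCont[OF elim]] show ?case .
  qed
qed

lemma jexpansion_iff_has_principal_part:
  "jexpansion \<phi> m s \<tau> E D \<longleftrightarrow>
     has_principal_part (\<lambda>\<epsilon>. ee (of_int m * of_rat (fst s) * zs s \<tau>) * \<phi> \<tau> (zs s \<tau> + \<epsilon>))
       E (D - 2 * of_int m * of_rat (fst s) * E)"
  unfolding jexpansion_def has_principal_part_def bigo_1_iff_eventually_norm_le by simp

lemma jexpansion_unique: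
  assumes "jexpansion \<phi> m s \<tau> E D" "jexpansion \<phi> m s \<tau> E' D'"
  shows "E = E' \<and> D = D'"
  using has_principal_part_unique assms unfolding jexpansion_iff_has_principal_part by fastforce

lemma JE_JD_eqI:
  assumes "jexpansion \<phi> m s \<tau> E D"
  shows "JE \<phi> m s \<tau> = E" "JD \<phi> m s \<tau> = D"
proof -
  have "(THE p. jexpansion \<phi> m s \<tau> (fst p) (snd p)) = (E, D)"
    using assms jexpansion_unique by (intro the_equality) (auto simp: prod_eq_iff)
  then show "JE \<phi> m s \<tau> = E" "JD \<phi> m s \<tau> = D"
    unfolding JE_def JD_def by simp_all
qed

lemma jexpansion_exists:
  assumes "isolated_singularity_at (\<phi> \<tau>) (zs s \<tau>)"
    and "\<exists>B. \<forall>\<^sub>F \<epsilon> in at 0. norm (\<epsilon>\<^sup>2 * \<phi> \<tau> (zs s \<tau> + \<epsilon>)) \<le> B"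
  shows "\<exists>E D. jexpansion \<phi> m s \<tau> E D"
proof -
  have "isolated_singularity_at (\<lambda>\<epsilon>. \<phi> \<tau> (zs s \<tau> + \<epsilon>)) 0"
    using assms(1) isolated_singularity_at_shift_iff[of "\<phi> \<tau>" 0 "zs s \<tau>"] by (simp add: add.commute)
  from has_principal_part_exists[OF this assms(2)]
  obtain E D where "has_principal_part (\<lambda>\<epsilon>. \<phi> \<tau> (zs s \<tau> + \<epsilon>)) E D" by blast
  from has_principal_part_rescale[OF this, of 1 "ee (of_int m * of_rat (fst s) * zs s \<tau>)"]
  have "jexpansion \<phi> m s \<tau> (ee (of_int m * of_rat (fst s) * zs s \<tau>) * E)
          (ee (of_int m * of_rat (fst s) * zs s \<tau>) * D
           + 2 * of_int m * of_rat (fst s) * (ee (of_int m * of_rat (fst s) * zs s \<tau>) * E))"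
    unfolding jexpansion_iff_has_principal_part by simp
  then show ?thesis by blast
qed

lemma countable_poles: "countable (poles S \<tau>)"
proof -
  have "poles S \<tau> = (\<lambda>s. zs s \<tau>) ` S"
    unfolding poles_def by auto
  then show ?thesis
    by (simp add: countable_subset[OF subset_UNIV])
qed

lemma Gamma0_Gamma1_det:
  assumes "G = Gamma0 N \<or> G = Gamma1 N" "(a, b, c, d) \<in> G"
  shows "a * d - b * c = 1"
  using assms by (auto simp: Gamma0_def Gamma1_def)

lemma moebius_denominator_nonzero:
  assumes "Im \<tau> > 0" "a * d - b * c = 1"
  shows "of_int c * \<tau> + of_int d \<noteq> 0"
proof
  assume "of_int c * \<tau> + of_int d = 0"
  then have "Im (of_int c * \<tau> + of_int d) = 0" "Re (of_int c * \<tau> + of_int d) = 0"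
    by simp_all
  then have "of_int c * Im \<tau> = 0" "of_int c * Re \<tau> + of_int d = 0"
    by simp_all
  with assms(1) have "c = 0" "d = 0"
    by simp_all
  with assms(2) show False
    by simp
qed

lemma moebius_in_upper_half_plane:
  assumes "\<tau> \<in> upper_half_plane" "a * d - b * c = 1"
  shows "(of_int a * \<tau> + of_int b) / (of_int c * \<tau> + of_int d) \<in> upper_half_plane"
proof -
  let ?u = "of_int a * \<tau> + of_int b" and ?j = "of_int c * \<tau> + of_int d"
  have "?j \<noteq> 0"
    using assms by (intro moebius_denominator_nonzero) (simp_all add: upper_half_plane_def)
  have "Im ?u * Re ?j - Re ?u * Im ?j = of_int (a * d - b * c) * Im \<tau>"
    by (simp add: algebra_simps)
  then have "Im (?u / ?j) = Im \<tau> / (norm ?j)\<^sup>2"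
    using assms(2) by (simp add: Im_divide')
  with assms(1) \<open>?j \<noteq> 0\<close> show ?thesis
    by (simp add: upper_half_plane_def)
qed

lemma zs_sact:
  assumes "of_int c * \<tau> + of_int d \<noteq> 0"
  shows "zs (sact s (a, b, c, d)) \<tau>
    = (of_int c * \<tau> + of_int d) * zs s ((of_int a * \<tau> + of_int b) / (of_int c * \<tau> + of_int d))"
  using assms by (simp add: zs_def sact_def of_rat_add of_rat_mult field_simps)

lemma of_int_mult_zs_sact:
  assumes "a * d - b * c = 1"
  shows "of_int c * zs (sact s (a, b, c, d)) \<tau>
    = of_rat (fst (sact s (a, b, c, d))) * (of_int c * \<tau> + of_int d) - of_rat (fst s)"
proof -
  have "of_int a * of_int d - of_int b * of_int c = (1 :: complex)"
    using arg_cong[OF assms, of "of_int :: int \<Rightarrow> complex"] by simp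
  moreover have "of_int c * zs (sact s (a, b, c, d)) \<tau>
      - (of_rat (fst (sact s (a, b, c, d))) * (of_int c * \<tau> + of_int d) - of_rat (fst s))
    = of_rat (fst s) * (1 - (of_int a * of_int d - of_int b * of_int c))"
    by (simp add: zs_def sact_def of_rat_add of_rat_mult algebra_simps)
  ultimately show ?thesis
    by simp
qed

lemma ee_add: "ee (x + y) = ee x * ee y"
  by (simp add: ee_def distrib_left exp_add)

lemma jacobi_exponent_identity:
  fixes M c j w z' \<alpha> \<alpha>' e :: complex
  assumes "j \<noteq> 0" "w = j * z'" "c * w = \<alpha>' * j - \<alpha>"
  shows "M * \<alpha>' * w = (2 * M * (\<alpha> / j - \<alpha>') * e - M * c / j * e\<^sup>2) + M * \<alpha> * z' + M * c * (w + e)\<^sup>2 / j"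
proof -
  have cz: "c * z' = \<alpha>' - \<alpha> / j"
    using assms by (simp add: field_simps)
  have "M * c * (w + e)\<^sup>2 / j = M * (\<alpha>' - \<alpha> / j) * (j * z') + 2 * M * e * (\<alpha>' - \<alpha> / j) + M * c / j * e\<^sup>2"
    unfolding cz[symmetric] using assms(1,2) by (simp add: field_simps power2_eq_square)
  then show ?thesis
    using assms(1,2) by (simp add: field_simps)
qed

lemma jacobi_law_near_pole:
  fixes \<phi> :: "complex \<Rightarrow> complex \<Rightarrow> complex" and \<tau> :: complex and s :: "rat \<times> rat" and a b c d k m :: int
  defines "j \<equiv> of_int c * \<tau> + of_int d"
    and "\<tau>' \<equiv> (of_int a * \<tau> + of_int b) / (of_int c * \<tau> + of_int d)"
    and "s' \<equiv> sact s (a, b, c, d)"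
  assumes det: "a * d - b * c = 1" and "j \<noteq> 0"
    and law: "\<And>z. z \<notin> poles S \<tau> \<Longrightarrow> z / j \<notin> poles S \<tau>' \<Longrightarrow>
                 \<phi> \<tau>' (z / j) = j powi k * ee (of_int m * of_int c * z\<^sup>2 / j) * \<phi> \<tau> z"
    and iso: "isolated_singularity_at (\<phi> \<tau>) (zs s' \<tau>)" "isolated_singularity_at (\<phi> \<tau>') (zs s \<tau>')"
  shows "\<forall>\<^sub>F e in at 0. ee (of_int m * of_rat (fst s') * zs s' \<tau>) * \<phi> \<tau> (zs s' \<tau> + e)
    = ee (2 * of_int m * (of_rat (fst s) / j - of_rat (fst s')) * e - of_int m * of_int c / j * e\<^sup>2)
      * (inverse (j powi k) * (ee (of_int m * of_rat (fst s) * zs s \<tau>') * \<phi> \<tau>' (zs s \<tau>' + e / j)))"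
    (is "\<forall>\<^sub>F e in at 0. ?lhs e = ?rhs e")
proof (rule eventually_at_eq_off_countable)
  define w z' \<alpha> \<alpha>' M where "w = zs s' \<tau>" and "z' = zs s \<tau>'" and "\<alpha> = (of_rat (fst s) :: complex)"
    and "\<alpha>' = (of_rat (fst s') :: complex)" and "M = (of_int m :: complex)"
  have w: "w = j * z'"
    using zs_sact \<open>j \<noteq> 0\<close> unfolding w_def z'_def s'_def j_def \<tau>'_def by blast
  have cw: "of_int c * w = \<alpha>' * j - \<alpha>"
    unfolding w_def \<alpha>'_def \<alpha>_def s'_def j_def by (rule of_int_mult_zs_sact[OF det])
  define C where "C = (\<lambda>q. q - w) ` poles S \<tau> \<union> (\<lambda>q. j * q - w) ` poles S \<tau>'"
  show "countable C"
    unfolding C_def using countable_poles by blast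
  have "\<forall>\<^sub>F e in at 0. isCont (\<lambda>e. \<phi> \<tau> (zs s' \<tau> + e)) e"
    using isolated_singularity_at_eventually_isCont_affine[OF iso(1) one_neq_zero] by simp
  moreover have "\<forall>\<^sub>F e in at 0. isCont (\<lambda>e. \<phi> \<tau>' (zs s \<tau>' + e / j)) e"
    using isolated_singularity_at_eventually_isCont_affine[OF iso(2) \<open>j \<noteq> 0\<close>] .
  ultimately show "\<forall>\<^sub>F e in at 0. isCont ?lhs e \<and> isCont ?rhs e"
    by eventually_elim (use \<open>j \<noteq> 0\<close> in \<open>auto intro!: continuous_intros simp: ee_def\<close>)
  show "\<forall>\<^sub>F e in at 0. e \<notin> C \<longrightarrow> ?lhs e = ?rhs e"
  proof (intro always_eventually allI impI)
    fix e assume "e \<notin> C"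
    then have "w + e \<notin> poles S \<tau>" "(w + e) / j \<notin> poles S \<tau>'"
      using \<open>j \<noteq> 0\<close> unfolding C_def by (force, force)
    from law[OF this] have law_e: "\<phi> \<tau>' (z' + e / j) = j powi k * ee (M * of_int c * (w + e)\<^sup>2 / j) * \<phi> \<tau> (w + e)"
      using \<open>j \<noteq> 0\<close> by (simp add: w M_def add_divide_distrib)
    note exponent = jacobi_exponent_identity[OF \<open>j \<noteq> 0\<close> w cw, of M e]
    have "ee (M * \<alpha>' * w) * \<phi> \<tau> (w + e)
      = ee (2 * M * (\<alpha> / j - \<alpha>') * e - M * of_int c / j * e\<^sup>2)
        * (inverse (j powi k) * (ee (M * \<alpha> * z') * \<phi> \<tau>' (z' + e / j)))"
      unfolding law_e using \<open>j \<noteq> 0\<close> by (subst exponent) (simp add: ee_add)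
    then show "?lhs e = ?rhs e"
      unfolding w_def z'_def \<alpha>_def \<alpha>'_def M_def .
  qed
qed

lemma jexpansion_modular_transform:
  fixes \<phi> :: "complex \<Rightarrow> complex \<Rightarrow> complex" and \<tau> :: complex and s :: "rat \<times> rat"
    and a b c d k m :: int
  defines "j \<equiv> of_int c * \<tau> + of_int d"
    and "\<tau>' \<equiv> (of_int a * \<tau> + of_int b) / (of_int c * \<tau> + of_int d)"
    and "s' \<equiv> sact s (a, b, c, d)"
  assumes det: "a * d - b * c = 1" and "j \<noteq> 0"
    and law: "\<And>z. z \<notin> poles S \<tau> \<Longrightarrow> z / j \<notin> poles S \<tau>' \<Longrightarrow>
                 \<phi> \<tau>' (z / j) = j powi k * ee (of_int m * of_int c * z\<^sup>2 / j) * \<phi> \<tau> z"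
    and iso: "isolated_singularity_at (\<phi> \<tau>) (zs s' \<tau>)" "isolated_singularity_at (\<phi> \<tau>') (zs s \<tau>')"
    and "jexpansion \<phi> m s \<tau>' E D"
  shows "jexpansion \<phi> m s' \<tau> (E / j powi (k - 2)) (D / j powi (k - 1))"
proof -
  define M \<alpha> \<alpha>' p where "M = (of_int m :: complex)" and "\<alpha> = (of_rat (fst s) :: complex)"
    and "\<alpha>' = (of_rat (fst s') :: complex)" and "p = inverse (j powi k)"
  have "has_principal_part (\<lambda>\<epsilon>. ee (M * \<alpha> * zs s \<tau>') * \<phi> \<tau>' (zs s \<tau>' + \<epsilon>)) E (D - 2 * M * \<alpha> * E)"
    using \<open>jexpansion \<phi> m s \<tau>' E D\<close> unfolding jexpansion_iff_has_principal_part M_def \<alpha>_def .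
  from has_principal_part_rescale[OF this \<open>j \<noteq> 0\<close>, of p]
  have "has_principal_part
      (\<lambda>\<epsilon>. ee (2 * M * (\<alpha> / j - \<alpha>') * \<epsilon> + - (M * of_int c / j) * \<epsilon>\<^sup>2)
        * (p * (ee (M * \<alpha> * zs s \<tau>') * \<phi> \<tau>' (zs s \<tau>' + \<epsilon> / j))))
      (p * j\<^sup>2 * E) (p * j * (D - 2 * M * \<alpha> * E) + 2 * M * (\<alpha> / j - \<alpha>') * (p * j\<^sup>2 * E))"
    by (rule has_principal_part_mult_ee)
  moreover have "\<forall>\<^sub>F \<epsilon> in at 0.
      ee (2 * M * (\<alpha> / j - \<alpha>') * \<epsilon> + - (M * of_int c / j) * \<epsilon>\<^sup>2)
        * (p * (ee (M * \<alpha> * zs s \<tau>') * \<phi> \<tau>' (zs s \<tau>' + \<epsilon> / j)))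
      = ee (M * \<alpha>' * zs s' \<tau>) * \<phi> \<tau> (zs s' \<tau> + \<epsilon>)"
    using jacobi_law_near_pole[where S = S, OF det \<open>j \<noteq> 0\<close>[unfolded j_def] law[unfolded j_def \<tau>'_def]
        iso[unfolded s'_def \<tau>'_def]]
    unfolding M_def \<alpha>_def \<alpha>'_def p_def s'_def j_def \<tau>'_def
    by (auto elim!: eventually_mono)
  ultimately have "has_principal_part (\<lambda>\<epsilon>. ee (M * \<alpha>' * zs s' \<tau>) * \<phi> \<tau> (zs s' \<tau> + \<epsilon>))
      (p * j\<^sup>2 * E) (p * j * (D - 2 * M * \<alpha> * E) + 2 * M * (\<alpha> / j - \<alpha>') * (p * j\<^sup>2 * E))"
    by (rule has_principal_part_cong[rotated])
  moreover have "p * j\<^sup>2 * E = E / j powi (k - 2)"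
    and "p * j * (D - 2 * M * \<alpha> * E) + 2 * M * (\<alpha> / j - \<alpha>') * (p * j\<^sup>2 * E)
      = D / j powi (k - 1) - 2 * M * \<alpha>' * (E / j powi (k - 2))"
    using \<open>j \<noteq> 0\<close> by (simp_all add: p_def power_int_diff field_simps power2_eq_square)
  ultimately show ?thesis
    unfolding jexpansion_iff_has_principal_part M_def \<alpha>'_def by simp
qed

lemma merom_jacobi_isolated_singularity:
  "merom_jacobi G k m S \<phi> \<Longrightarrow> \<tau> \<in> upper_half_plane \<Longrightarrow> isolated_singularity_at (\<phi> \<tau>) z"
  unfolding merom_jacobi_def meromorphic_on_altdef by blast

lemma merom_jacobi_double_pole_bound:
  "merom_jacobi G k m S \<phi> \<Longrightarrow> \<tau> \<in> upper_half_plane \<Longrightarrow> s \<in> S \<Longrightarrow>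
     \<exists>B. \<forall>\<^sub>F \<epsilon> in at 0. norm (\<epsilon>\<^sup>2 * \<phi> \<tau> (zs s \<tau> + \<epsilon>)) \<le> B"
  unfolding merom_jacobi_def by blast

lemma merom_jacobi_modular_law:
  assumes "merom_jacobi G k m S \<phi>" "(a, b, c, d) \<in> G" "\<tau> \<in> upper_half_plane"
    and "z \<notin> poles S \<tau>"
    and "z / (of_int c * \<tau> + of_int d) \<notin> poles S ((of_int a * \<tau> + of_int b) / (of_int c * \<tau> + of_int d))"
  shows "\<phi> ((of_int a * \<tau> + of_int b) / (of_int c * \<tau> + of_int d)) (z / (of_int c * \<tau> + of_int d))
    = (of_int c * \<tau> + of_int d) powi k * ee (of_int m * of_int c * z\<^sup>2 / (of_int c * \<tau> + of_int d)) * \<phi> \<tau> z"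
  using assms unfolding merom_jacobi_def by fast

theorem proposition3p5:
  fixes N k m :: int and G :: "(int \<times> int \<times> int \<times> int) set"
    and S :: "(rat \<times> rat) set" and \<phi> :: "complex \<Rightarrow> complex \<Rightarrow> complex"
  assumes "N \<ge> 1"
    and "G = Gamma0 N \<or> G = Gamma1 N"
    and "m > 0"
    and "merom_jacobi G k m S \<phi>"
    and "(a, b, c, d) \<in> G"
    and "s \<in> S"
    and "\<tau> \<in> upper_half_plane"
  shows "JE \<phi> m s ((of_int a * \<tau> + of_int b) / (of_int c * \<tau> + of_int d))
           = (of_int c * \<tau> + of_int d) powi (k - 2) * JE \<phi> m (sact s (a, b, c, d)) \<tau>
       \<and> JD \<phi> m s ((of_int a * \<tau> + of_int b) / (of_int c * \<tau> + of_int d))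
           = (of_int c * \<tau> + of_int d) powi (k - 1) * JD \<phi> m (sact s (a, b, c, d)) \<tau>"
proof -
  have det: "a * d - b * c = 1"
    using assms(2,5) by (rule Gamma0_Gamma1_det)
  have j: "of_int c * \<tau> + of_int d \<noteq> 0"
    using assms(7) det by (intro moebius_denominator_nonzero) (simp_all add: upper_half_plane_def)
  have \<tau>': "(of_int a * \<tau> + of_int b) / (of_int c * \<tau> + of_int d) \<in> upper_half_plane"
    using assms(7) det by (rule moebius_in_upper_half_plane)
  obtain E D where ED: "jexpansion \<phi> m s ((of_int a * \<tau> + of_int b) / (of_int c * \<tau> + of_int d)) E D"
    using jexpansion_exists merom_jacobi_isolated_singularity[OF assms(4) \<tau>']
      merom_jacobi_double_pole_bound[OF assms(4) \<tau>' assms(6)] by blast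
  have "jexpansion \<phi> m (sact s (a, b, c, d)) \<tau>
      (E / (of_int c * \<tau> + of_int d) powi (k - 2)) (D / (of_int c * \<tau> + of_int d) powi (k - 1))"
    by (rule jexpansion_modular_transform[OF det j merom_jacobi_modular_law[OF assms(4,5,7)]
          merom_jacobi_isolated_singularity[OF assms(4,7)]
          merom_jacobi_isolated_singularity[OF assms(4) \<tau>'] ED])
  with ED j show ?thesis
    by (simp add: JE_JD_eqI)
qed

end
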